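(* For every $n\ge2$, the problem FGP of gathering all robots (including a faulty one) at a single point in the presence of at most one crash fault is unsolvable under the SSYNC scheduler by any algorithm (of any size $\le n$); i.e., its MAS is $\infty$.
   Context: Model. A swarm consists of $n\ge1$ robots $r_1,\dots,r_n$, modeled as points in $\mathbb R^2$. Each robot $r_i$ has a local right-handed $x$-$y$ coordinate system $Z_i$ whose origin is always the robot's current position, with arbitrary (adversarially chosen, fixed) unit length and axis orientation; robots do not share coordinate systems. The configuration at time $t$ is the multiset $P_t$ of the $n$ robot positions (robots can detect multiplicities). A target function $\phi$ maps each finite multiset $P$ of points of $\mathbb R^2$ with $(0,0)\in P$ to a point $\phi(P)\in\mathbb R^2$. Time is discrete, $t=0,1,2,\dots$. Under the semi-synchronous (SSYNC) scheduler, at each time $t$ an adversary chooses a set of robots to activate; each activated robot $r_i$ observes $P_t$ expressed in $Z_i$, evaluates its target function on this multiset, and moves to the resulting point (interpreted in $Z_i$), arriving before time $t+1$; non-activated robots do not move. Schedules are fair: every robot is activated infinitely often. An algorithm of size $m$ is a set $\Phi$ of $m$ distinct target functions ($m\le n$); an assignment is a surjection $\mathcal A$ from the robots onto $\Phi$, robot $r_i$ using $\mathcal A(r_i)$. $\Phi$ solves a problem if for every assignment, every choice of local coordinate systems, every initial configuration and every fair SSYNC schedule, the resulting execution solves the problem. The MAS of a problem is the least $m$ such that some algorithm of size $m$ solves it, and $\infty$ if no algorithm of any size $m\le n$ solves it. Crash faults. The adversary may choose up to $f$ robots to be faulty and, for each, a time from which it crashes: from then on it never moves again (even when activated); before that it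 behaves correctly. "Solves under at most $f$ crashes" quantifies additionally over all such crash patterns. Problem. FGP: starting from any initial configuration, with at most one crashed robot, reach a configuration in which all $n$ robots (faulty ones included) occupy a single point. *)

theory Defs
  imports Complex_Main "HOL-Library.Multiset" "HOL-Library.Extended_Nat"
begin

text \<open>The plane R^2 is modelled as the complex numbers. Robots are 0,...,n-1.
  A local right-handed coordinate system with arbitrary unit length and axis
  orientation, whose origin is the robot's current position, is given by a fixed
  nonzero complex number c: local coordinates z correspond to the global point
  (robot position) + c * z.\<close>

type_synonym target = "complex multiset \<Rightarrow> complex"

definition config :: "nat \<Rightarrow> (nat \<Rightarrow> complex) \<Rightarrow> complex multiset" where
  "config n p = image_mset p (mset_set {..<n})"

definition local_view :: "nat \<Rightarrow> (nat \<Rightarrow> complex) \<Rightarrow> complex \<Rightarrow> nat \<Rightarrow> complex multiset" where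
  "local_view n p c i = image_mset (\<lambda>q. (q - p i) / c) (config n p)"

definition fair_schedule :: "nat \<Rightarrow> (nat \<Rightarrow> nat set) \<Rightarrow> bool" where
  "fair_schedule n act \<longleftrightarrow> (\<forall>i<n. \<forall>T. \<exists>t\<ge>T. i \<in> act t)"

definition ssync_crash_exec ::
  "nat \<Rightarrow> (nat \<Rightarrow> target) \<Rightarrow> (nat \<Rightarrow> complex) \<Rightarrow> (nat \<Rightarrow> nat set) \<Rightarrow> nat option \<Rightarrow> nat
   \<Rightarrow> (nat \<Rightarrow> nat \<Rightarrow> complex) \<Rightarrow> bool" where
  "ssync_crash_exec n A frame act faulty ct x \<longleftrightarrow>
     (\<forall>t i. i < n \<longrightarrow>
        x (Suc t) i =
          (if i \<in> act t \<and> \<not> (faulty = Some i \<and> ct \<le> t)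
           then x t i + frame i * A i (local_view n (x t) (frame i) i)
           else x t i))"

definition solves_FGP :: "nat \<Rightarrow> target set \<Rightarrow> bool" where
  "solves_FGP n Phi \<longleftrightarrow>
     (\<forall>A. A ` {..<n} = Phi \<longrightarrow>
      (\<forall>frame. (\<forall>i<n. frame i \<noteq> 0) \<longrightarrow>
       (\<forall>act. fair_schedule n act \<longrightarrow>
        (\<forall>faulty ct. (\<forall>i. faulty = Some i \<longrightarrow> i < n) \<longrightarrow>
         (\<forall>x. ssync_crash_exec n A frame act faulty ct x \<longrightarrow>
              (\<exists>t. \<forall>i<n. \<forall>j<n. x t i = x t j))))))"

definition FGP_MAS :: "nat \<Rightarrow> enat" where
  "FGP_MAS n =
     (if \<exists>m. 1 \<le> m \<and> m \<le> n \<and> (\<exists>Phi. finite Phi \<and> card Phi = m \<and> solves_FGP n Phi)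
      then enat (LEAST m. 1 \<le> m \<and> m \<le> n \<and> (\<exists>Phi. finite Phi \<and> card Phi = m \<and> solves_FGP n Phi))
      else \<infinity>)"

end

theory Submission
  imports Defs
begin

text \<open>An adaptive round-robin adversary keeps every algorithm from gathering. At time t it
  activates robot r = t mod n. If r's move alone would gather the swarm, it also activates a
  robot j \<noteq> r whose move is nontrivial: j was at the gathering point, so it leaves it. If no
  such j exists, every robot other than r is content with the current configuration; the
  adversary then crashes r and activates everybody forever, so nothing moves again. The
  configuration therefore never becomes gathered.\<close>

definition gathered :: "nat \<Rightarrow> (nat \<Rightarrow> 'a) \<Rightarrow> bool" where
  "gathered n y \<longleftrightarrow> (\<forall>i<n. \<forall>j<n. y i = y j)"

text \<open>F i y is the global target point of robot i in configuration y.\<close>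
definition crash_execution ::
  "nat \<Rightarrow> (nat \<Rightarrow> (nat \<Rightarrow> 'a) \<Rightarrow> 'a) \<Rightarrow> (nat \<Rightarrow> nat set) \<Rightarrow> nat option \<Rightarrow> nat
   \<Rightarrow> (nat \<Rightarrow> nat \<Rightarrow> 'a) \<Rightarrow> bool" where
  "crash_execution n F act faulty ct x \<longleftrightarrow>
     (\<forall>t i. i < n \<longrightarrow>
        x (Suc t) i = (if i \<in> act t \<and> \<not> (faulty = Some i \<and> ct \<le> t) then F i (x t) else x t i))"

lemma ssync_crash_exec_iff_crash_execution:
  "ssync_crash_exec n A frame act faulty ct x \<longleftrightarrow>
   crash_execution n (\<lambda>i y. y i + frame i * A i (local_view n y (frame i) i)) act faulty ct x"
  unfolding ssync_crash_exec_def crash_execution_def by (intro all_cong1) auto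

lemma fair_schedule_if_round_robin:
  assumes "\<And>t. t mod n \<in> act t"
  shows "fair_schedule n act"
  unfolding fair_schedule_def
proof (intro allI impI)
  fix i T assume "i < n"
  then have "(T * n + i) mod n = i" by simp
  moreover have "T \<le> T * n + i" using \<open>i < n\<close> by (simp add: trans_le_add1)
  ultimately show "\<exists>t\<ge>T. i \<in> act t" using assms by metis
qed

lemma exists_surjective_assignment:
  assumes "finite Phi" "1 \<le> card Phi" "card Phi \<le> n"
  obtains A :: "nat \<Rightarrow> 'a" where "A ` {..<n} = Phi"
proof -
  obtain h where h: "bij_betw h {..<card Phi} Phi"
    using assms(1) bij_betw_from_nat_into_finite by blast
  have "(\<lambda>i. min i (card Phi - 1)) ` {..<n} = {..<card Phi}"
  proof
    show "{..<card Phi} \<subseteq> (\<lambda>i. min i (card Phi - 1)) ` {..<n}"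
    proof
      fix k assume "k \<in> {..<card Phi}"
      then have "k = min k (card Phi - 1)" "k < n" using assms(3) by auto
      then show "k \<in> (\<lambda>i. min i (card Phi - 1)) ` {..<n}" by blast
    qed
  qed (use assms(2) in auto)
  then have "h ` (\<lambda>i. min i (card Phi - 1)) ` {..<n} = Phi"
    using h by (simp add: bij_betw_def)
  then show thesis by (intro that[of "\<lambda>i. h (min i (card Phi - 1))"]) (simp add: image_image)
qed

context
  fixes n :: nat and F :: "nat \<Rightarrow> (nat \<Rightarrow> 'a) \<Rightarrow> 'a"
begin

definition activate :: "nat set \<Rightarrow> (nat \<Rightarrow> 'a) \<Rightarrow> nat \<Rightarrow> 'a" where
  "activate S y i = (if i \<in> S then F i y else y i)"

definition stuck :: "nat \<Rightarrow> (nat \<Rightarrow> 'a) \<Rightarrow> bool" where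
  "stuck r y \<longleftrightarrow> gathered n (y(r := F r y)) \<and> (\<forall>j<n. j \<noteq> r \<longrightarrow> F j y = y j)"

definition adversary_choice :: "nat \<Rightarrow> (nat \<Rightarrow> 'a) \<Rightarrow> nat set" where
  "adversary_choice r y =
     (if gathered n (y(r := F r y)) then {r, SOME j. j < n \<and> j \<noteq> r \<and> F j y \<noteq> y j} else {r})"

primrec adversary_run :: "(nat \<Rightarrow> 'a) \<Rightarrow> nat \<Rightarrow> nat \<Rightarrow> 'a" where
  "adversary_run y0 0 = y0"
| "adversary_run y0 (Suc t) =
     activate (adversary_choice (t mod n) (adversary_run y0 t)) (adversary_run y0 t)"

lemma not_gathered_activate_adversary_choice:
  assumes "r < n" "\<not> stuck r y"
  shows "\<not> gathered n (activate (adversary_choice r y) y)"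
proof (cases "gathered n (y(r := F r y))")
  case True
  define j where "j = (SOME j. j < n \<and> j \<noteq> r \<and> F j y \<noteq> y j)"
  have "\<exists>j<n. j \<noteq> r \<and> F j y \<noteq> y j" using True assms(2) unfolding stuck_def by blast
  then have "j < n \<and> j \<noteq> r \<and> F j y \<noteq> y j" unfolding j_def by (rule someI_ex)
  then have j: "j < n" "j \<noteq> r" "F j y \<noteq> y j" by auto
  have "y j = F r y" using True j assms(1) unfolding gathered_def by (metis fun_upd_apply)
  moreover have "adversary_choice r y = {r, j}" using True by (simp add: adversary_choice_def j_def)
  ultimately have "activate (adversary_choice r y) y j \<noteq> activate (adversary_choice r y) y r"
    using j unfolding activate_def by auto
  then show ?thesis using j assms(1) unfolding gathered_def by blast
next
  case False
  then have "activate (adversary_choice r y) y = y(r := F r y)"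
    by (auto simp: adversary_choice_def activate_def)
  with False show ?thesis by simp
qed

lemma not_gathered_adversary_run:
  assumes "\<not> gathered n y0" "\<forall>s<t. \<not> stuck (s mod n) (adversary_run y0 s)"
  shows "\<not> gathered n (adversary_run y0 t)"
  using assms(2)
proof (induction t)
  case (Suc t)
  have "0 < n" using assms(1) unfolding gathered_def by auto
  then show ?case using Suc.prems not_gathered_activate_adversary_choice by simp
qed (use assms(1) in simp)

lemma adversary_without_crash:
  assumes "\<not> gathered n y0" "\<forall>t. \<not> stuck (t mod n) (adversary_run y0 t)"
  defines "act \<equiv> \<lambda>t. adversary_choice (t mod n) (adversary_run y0 t)"
  shows "fair_schedule n act" "crash_execution n F act None 0 (adversary_run y0)"
    "\<forall>t. \<not> gathered n (adversary_run y0 t)"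
proof -
  show "fair_schedule n act"
    by (rule fair_schedule_if_round_robin) (simp add: act_def adversary_choice_def)
  show "crash_execution n F act None 0 (adversary_run y0)"
    unfolding crash_execution_def act_def by (simp add: activate_def)
  show "\<forall>t. \<not> gathered n (adversary_run y0 t)"
    using assms(2) not_gathered_adversary_run[OF assms(1)] by blast
qed

lemma adversary_with_crash:
  assumes "\<not> gathered n y0" "stuck (t0 mod n) (adversary_run y0 t0)"
    "\<forall>s<t0. \<not> stuck (s mod n) (adversary_run y0 s)"
  defines "act \<equiv> \<lambda>t. if t < t0 then adversary_choice (t mod n) (adversary_run y0 t) else UNIV"
    and "x \<equiv> \<lambda>t. adversary_run y0 (min t t0)"
  shows "fair_schedule n act" "crash_execution n F act (Some (t0 mod n)) t0 x"
    "\<forall>t. \<not> gathered n (x t)"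
proof -
  show "fair_schedule n act"
    by (rule fair_schedule_if_round_robin) (simp add: act_def adversary_choice_def)
  show "crash_execution n F act (Some (t0 mod n)) t0 x"
    unfolding crash_execution_def
  proof (intro allI impI)
    fix t i assume "i < n"
    show "x (Suc t) i = (if i \<in> act t \<and> \<not> (Some (t0 mod n) = Some i \<and> t0 \<le> t)
                         then F i (x t) else x t i)"
    proof (cases "t < t0")
      case True
      then have "x (Suc t) = adversary_run y0 (Suc t)" "x t = adversary_run y0 t"
        "act t = adversary_choice (t mod n) (adversary_run y0 t)"
        by (simp_all add: x_def act_def)
      with True show ?thesis by (simp add: activate_def)
    next
      case False
      then have "x (Suc t) = adversary_run y0 t0" "x t = adversary_run y0 t0" "act t = UNIV"
        by (simp_all add: x_def act_def)
      moreover have "F i (adversary_run y0 t0) = adversary_run y0 t0 i" if "i \<noteq> t0 mod n"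
        using assms(2) \<open>i < n\<close> that unfolding stuck_def by blast
      ultimately show ?thesis using False by auto
    qed
  qed
  show "\<forall>t. \<not> gathered n (x t)"
  proof
    fix t
    have "\<forall>s<min t t0. \<not> stuck (s mod n) (adversary_run y0 s)" using assms(3) by simp
    then show "\<not> gathered n (x t)" unfolding x_def by (rule not_gathered_adversary_run[OF assms(1)])
  qed
qed

lemma crash_adversary_prevents_gathering:
  fixes y0 :: "nat \<Rightarrow> 'a"
  assumes "\<not> gathered n y0"
  obtains act faulty ct x where "fair_schedule n act" "\<forall>i. faulty = Some i \<longrightarrow> i < n"
    "crash_execution n F act faulty ct x" "\<forall>t. \<not> gathered n (x t)"
proof (cases "\<exists>t. stuck (t mod n) (adversary_run y0 t)")
  case True
  define t0 where "t0 = (LEAST t. stuck (t mod n) (adversary_run y0 t))"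
  have stuck: "stuck (t0 mod n) (adversary_run y0 t0)"
    using True unfolding t0_def by (rule LeastI_ex)
  have before: "\<forall>s<t0. \<not> stuck (s mod n) (adversary_run y0 s)"
    unfolding t0_def using not_less_Least by blast
  have "t0 mod n < n" using assms unfolding gathered_def by auto
  then have "\<forall>i. Some (t0 mod n) = Some i \<longrightarrow> i < n" by simp
  then show thesis
    using that adversary_with_crash[OF assms stuck before] by blast
next
  case False
  then have "\<forall>t. \<not> stuck (t mod n) (adversary_run y0 t)" by blast
  moreover have "\<forall>i. None = Some i \<longrightarrow> i < n" by simp
  ultimately show thesis
    using that adversary_without_crash[OF assms] by blast
qed

end

lemma not_gathered_of_nat:
  assumes "2 \<le> n"
  shows "\<not> gathered n (of_nat :: nat \<Rightarrow> 'a :: semiring_char_0)"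
proof
  assume "gathered n (of_nat :: nat \<Rightarrow> 'a)"
  moreover have "0 < n" "1 < n" using assms by auto
  ultimately have "(of_nat 0 :: 'a) = of_nat 1" unfolding gathered_def by blast
  then show False by simp
qed

lemma not_solves_FGP:
  fixes y0 :: "nat \<Rightarrow> complex"
  assumes "\<not> gathered n y0" and A: "A ` {..<n} = Phi"
  shows "\<not> solves_FGP n Phi"
proof
  assume solves: "solves_FGP n Phi"
  define frame :: "nat \<Rightarrow> complex" where "frame = (\<lambda>_. 1)"
  obtain act faulty ct x where fair: "fair_schedule n act"
    and faulty: "\<forall>i. faulty = Some i \<longrightarrow> i < n"
    and exec: "crash_execution n (\<lambda>i y. y i + frame i * A i (local_view n y (frame i) i))
                 act faulty ct x"
    and never: "\<forall>t. \<not> gathered n (x t)"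
    using assms(1) by (rule crash_adversary_prevents_gathering)
  have ssync: "ssync_crash_exec n A frame act faulty ct x"
    using exec by (simp only: ssync_crash_exec_iff_crash_execution)
  have frame: "\<forall>i<n. frame i \<noteq> 0" by (simp add: frame_def)
  have "\<exists>t. gathered n (x t)"
    using solves[unfolded solves_FGP_def, rule_format,
                 OF A frame[rule_format] fair faulty[rule_format] ssync]
    unfolding gathered_def .
  with never show False by blast
qed

theorem theoremT4050:
  fixes n :: nat
  assumes "n \<ge> 2"
  shows "(\<forall>Phi. finite Phi \<and> 1 \<le> card Phi \<and> card Phi \<le> n \<longrightarrow> \<not> solves_FGP n Phi)
         \<and> FGP_MAS n = \<infinity>"
proof -
  have "\<not> solves_FGP n Phi"
    if Phi: "finite Phi" "1 \<le> card Phi" "card Phi \<le> n" for Phi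
  proof -
    obtain A where "A ` {..<n} = Phi" using Phi by (rule exists_surjective_assignment)
    with not_gathered_of_nat[OF assms] show ?thesis by (rule not_solves_FGP)
  qed
  then show ?thesis unfolding FGP_MAS_def by auto
qed

end
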